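(* Let $G$ be an M-graph and let $D$ be an effective real divisor on $G$. Then $D$ is linearly equivalent to a totally real effective divisor on $G$.
   Context: A finite graph $G$ has vertex set $V(G)$, edge set $E(G)$ and incidence function $\psi$ assigning to each edge a set of one or two vertices (loops and multiple edges allowed); $G$ is assumed connected, with genus $g(G)=|E(G)|-|V(G)|+1$ (for a possibly disconnected graph $H$, $g(H)=c(H)+|E(H)|-|V(H)|$ with $c(H)$ its number of components). A real structure is a pair of involutions of $V(G)$, $E(G)$, written $v\mapsto\overline v$, $e\mapsto\overline e$, with $\psi(\overline e)=\overline{\psi(e)}$. Real vertices/edges are the fixed ones; $V_{\mathbb R}(G)$ is the set of real vertices; a real edge is isolated if not all of its ends are real, non-isolated otherwise. $G(\mathbb R)$ is the subgraph with vertices $V_{\mathbb R}(G)$ and edges the non-isolated real edges. $s(G)=e^i(G)+\sum_i(g(G(\mathbb R)_i)+1)$, the sum over the connected components $G(\mathbb R)_i$ of $G(\mathbb R)$ and $e^i(G)$ the number of isolated real edges. $G$ is an M-graph if it has no isolated real edge and $s(G)=g(G)+1$. Divisors are formal $\mathbb Z$-combinations of vertices; $\overline D(v)=D(\overline v)$; $D$ is real if $\overline D=D$, and totally real if moreover its support is contained in $V_{\mathbb R}(G)$. For $f:V(G)\to\mathbb Z$, $\Delta(f)(v)=\sum_{e,\,\psi(e)=\{v,w\}}(f(w)-f(v))$; $D_1\sim D_2$ iff $D_2-D_1=\Delta(f)$ for some $f$. *)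

theory Defs
  imports Main
begin

text \<open>A finite graph is given by a vertex set V, an edge set E and an incidence
 function psi assigning to each edge a set of one or two vertices (loops and multiple
 edges allowed).\<close>

definition graph :: "'v set \<Rightarrow> 'e set \<Rightarrow> ('e \<Rightarrow> 'v set) \<Rightarrow> bool" where
  "graph V E psi \<longleftrightarrow> finite V \<and> finite E \<and>
     (\<forall>e\<in>E. psi e \<subseteq> V \<and> psi e \<noteq> {} \<and> card (psi e) \<le> 2)"

definition adj :: "'e set \<Rightarrow> ('e \<Rightarrow> 'v set) \<Rightarrow> ('v \<times> 'v) set" where
  "adj E' psi = {(v, w). \<exists>e\<in>E'. psi e = {v, w}}"

definition connected_graph :: "'v set \<Rightarrow> 'e set \<Rightarrow> ('e \<Rightarrow> 'v set) \<Rightarrow> bool" where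
  "connected_graph V E psi \<longleftrightarrow> V \<noteq> {} \<and> (\<forall>v\<in>V. \<forall>w\<in>V. (v, w) \<in> (adj E psi)\<^sup>*)"

text \<open>connected components (as vertex sets) of the subgraph (V', E'), where every
 edge of E' has its ends in V'\<close>
definition components :: "'v set \<Rightarrow> 'e set \<Rightarrow> ('e \<Rightarrow> 'v set) \<Rightarrow> 'v set set" where
  "components V' E' psi = {{w \<in> V'. (v, w) \<in> (adj E' psi)\<^sup>*} | v. v \<in> V'}"

definition genus :: "'v set \<Rightarrow> 'e set \<Rightarrow> int" where
  "genus V E = int (card E) - int (card V) + 1"

definition real_structure ::
  "'v set \<Rightarrow> 'e set \<Rightarrow> ('e \<Rightarrow> 'v set) \<Rightarrow> ('v \<Rightarrow> 'v) \<Rightarrow> ('e \<Rightarrow> 'e) \<Rightarrow> bool" where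
  "real_structure V E psi sv se \<longleftrightarrow>
     (\<forall>v\<in>V. sv v \<in> V \<and> sv (sv v) = v) \<and>
     (\<forall>e\<in>E. se e \<in> E \<and> se (se e) = e \<and> psi (se e) = sv ` psi e)"

definition real_vertices :: "'v set \<Rightarrow> ('v \<Rightarrow> 'v) \<Rightarrow> 'v set" where
  "real_vertices V sv = {v \<in> V. sv v = v}"

definition isolated_real_edges ::
  "'v set \<Rightarrow> 'e set \<Rightarrow> ('e \<Rightarrow> 'v set) \<Rightarrow> ('v \<Rightarrow> 'v) \<Rightarrow> ('e \<Rightarrow> 'e) \<Rightarrow> 'e set" where
  "isolated_real_edges V E psi sv se =
     {e \<in> E. se e = e \<and> \<not> psi e \<subseteq> real_vertices V sv}"

definition real_edges ::
  "'v set \<Rightarrow> 'e set \<Rightarrow> ('e \<Rightarrow> 'v set) \<Rightarrow> ('v \<Rightarrow> 'v) \<Rightarrow> ('e \<Rightarrow> 'e) \<Rightarrow> 'e set" where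
  "real_edges V E psi sv se =
     {e \<in> E. se e = e \<and> psi e \<subseteq> real_vertices V sv}"

definition s_inv ::
  "'v set \<Rightarrow> 'e set \<Rightarrow> ('e \<Rightarrow> 'v set) \<Rightarrow> ('v \<Rightarrow> 'v) \<Rightarrow> ('e \<Rightarrow> 'e) \<Rightarrow> int" where
  "s_inv V E psi sv se =
     int (card (isolated_real_edges V E psi sv se)) +
     (\<Sum>C\<in>components (real_vertices V sv) (real_edges V E psi sv se) psi.
        genus C {e \<in> real_edges V E psi sv se. psi e \<subseteq> C} + 1)"

definition M_graph ::
  "'v set \<Rightarrow> 'e set \<Rightarrow> ('e \<Rightarrow> 'v set) \<Rightarrow> ('v \<Rightarrow> 'v) \<Rightarrow> ('e \<Rightarrow> 'e) \<Rightarrow> bool" where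
  "M_graph V E psi sv se \<longleftrightarrow>
     isolated_real_edges V E psi sv se = {} \<and>
     s_inv V E psi sv se = genus V E + 1"

definition divisor :: "'v set \<Rightarrow> ('v \<Rightarrow> int) \<Rightarrow> bool" where
  "divisor V D \<longleftrightarrow> (\<forall>v. v \<notin> V \<longrightarrow> D v = 0)"

definition effective :: "'v set \<Rightarrow> ('v \<Rightarrow> int) \<Rightarrow> bool" where
  "effective V D \<longleftrightarrow> (\<forall>v\<in>V. D v \<ge> 0)"

definition real_divisor :: "'v set \<Rightarrow> ('v \<Rightarrow> 'v) \<Rightarrow> ('v \<Rightarrow> int) \<Rightarrow> bool" where
  "real_divisor V sv D \<longleftrightarrow> (\<forall>v\<in>V. D (sv v) = D v)"

definition totally_real :: "'v set \<Rightarrow> ('v \<Rightarrow> 'v) \<Rightarrow> ('v \<Rightarrow> int) \<Rightarrow> bool" where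
  "totally_real V sv D \<longleftrightarrow> real_divisor V sv D \<and>
     (\<forall>v\<in>V. D v \<noteq> 0 \<longrightarrow> v \<in> real_vertices V sv)"

text \<open>Laplacian: Delta(f)(v) = sum over edges e with psi e = {v,w} of (f w - f v);
 loops contribute 0.\<close>
definition laplacian :: "'e set \<Rightarrow> ('e \<Rightarrow> 'v set) \<Rightarrow> ('v \<Rightarrow> int) \<Rightarrow> 'v \<Rightarrow> int" where
  "laplacian E psi f v =
     (\<Sum>e\<in>{e \<in> E. v \<in> psi e}. \<Sum>w\<in>psi e - {v}. f w - f v)"

definition lin_equiv ::
  "'v set \<Rightarrow> 'e set \<Rightarrow> ('e \<Rightarrow> 'v set) \<Rightarrow> ('v \<Rightarrow> int) \<Rightarrow> ('v \<Rightarrow> int) \<Rightarrow> bool" where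
  "lin_equiv V E psi D1 D2 \<longleftrightarrow>
     (\<exists>f :: 'v \<Rightarrow> int. \<forall>v\<in>V. D2 v - D1 v = laplacian E psi f v)"

end

theory Submission
  imports Defs "HOL-Library.Disjoint_Sets"
begin

text \<open>Contract every connected component of the real part \<open>G(R)\<close> and every pair \<open>{v, sv v}\<close>
  of conjugate non-real vertices to a point. For an M-graph the equation \<open>s(G) = g(G) + 1\<close> says
  that there is exactly one more such block than there are conjugate pairs of non-real edges, so
  one edge from each pair forms a spanning tree of the contracted graph. Hence, for an edge \<open>e\<close>
  from a non-real vertex \<open>u\<close> to \<open>x\<close>, deleting \<open>e\<close> and its conjugate separates \<open>{u, sv u}\<close> from
  \<open>{x, sv x}\<close>, and firing the side of \<open>u\<close> moves the divisor \<open>u + sv u\<close> to \<open>x + sv x\<close>. Walking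
  to a real vertex, each \<open>u + sv u\<close> is equivalent to a totally real effective divisor, and an
  effective real divisor is a sum of such divisors and of real points.\<close>

abbreviation same_block :: "'a set set \<Rightarrow> ('a \<times> 'a) set" where
  "same_block P \<equiv> {(x, y). \<exists>p\<in>P. x \<in> p \<and> y \<in> p}"

lemma same_blockI: "p \<in> P \<Longrightarrow> x \<in> p \<Longrightarrow> y \<in> p \<Longrightarrow> (x, y) \<in> same_block P"
  by blast

lemma adj_insert: "adj (insert x X) psi = adj X psi \<union> {(v, w). psi x = {v, w}}"
  unfolding adj_def by auto

lemma sym_adj: "sym (adj X psi)"
  unfolding adj_def sym_def by (auto simp: insert_commute)

lemma partition_on_merge:
  assumes P: "partition_on A P" and pq: "p \<in> P" "q \<in> P"
  shows "partition_on A (insert (p \<union> q) (P - {p, q}))"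
proof (rule partition_onI)
  show "\<Union> (insert (p \<union> q) (P - {p, q})) = A"
    using P pq by (auto simp: partition_on_def)
  show "{} \<notin> insert (p \<union> q) (P - {p, q})"
    using P pq by (auto simp: partition_on_def)
  show "disjnt r s"
    if "r \<in> insert (p \<union> q) (P - {p, q})" "s \<in> insert (p \<union> q) (P - {p, q})" "r \<noteq> s" for r s
    using that disjointD[OF partition_onD2[OF P]] pq by (auto simp: disjnt_def)
qed

lemma partition_on_block_eq:
  assumes "partition_on A P" "p \<in> P" "q \<in> P" "x \<in> p" "x \<in> q"
  shows "p = q"
  using assms disjointD[OF partition_onD2[OF assms(1)]] by blast

lemma card_le_Suc_card_partition_merge:
  assumes P: "partition_on A P" "finite P" and pq: "p \<in> P" "q \<in> P"
  shows "card P \<le> card (insert (p \<union> q) (P - {p, q})) + 1"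
proof (cases "p = q")
  case True
  then show ?thesis
    using pq by (simp add: insert_absorb)
next
  case False
  obtain x y where "x \<in> p" "y \<in> q"
    using pq P(1) partition_onD3 by fastforce
  then have "p \<union> q \<notin> P"
    using pq False partition_on_block_eq[OF P(1), of "p \<union> q"] by blast
  then have "card (insert (p \<union> q) (P - {p, q})) = card (P - {p, q}) + 1"
    using P(2) by simp
  moreover have "card (P - {p, q}) = card P - 2"
    using pq P(2) False by (subst card_Diff_subset) auto
  moreover have "card {p, q} \<le> card P"
    using pq P(2) by (intro card_mono) auto
  ultimately show ?thesis
    using False by simp
qed

lemma card_le_one_if_connected_blocks:
  assumes P: "partition_on A P" "finite P"
    and conn: "\<forall>v\<in>A. \<forall>w\<in>A. (v, w) \<in> (same_block P)\<^sup>*"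
  shows "card P \<le> 1"
proof -
  have "trans (same_block P)"
    using equiv_partition_on[OF P(1)] by (rule equivE)
  then have "(same_block P)\<^sup>* = same_block P \<union> Id"
    by (simp add: rtrancl_trancl_reflcl)
  have "p = q" if pq: "p \<in> P" "q \<in> P" for p q
  proof -
    obtain x y where xy: "x \<in> p" "y \<in> q"
      using pq P(1) partition_onD3 by fastforce
    moreover have "x \<in> A" "y \<in> A"
      using pq xy partition_onD1[OF P(1)] by auto
    ultimately have "(x, y) \<in> same_block P \<union> Id"
      using conn \<open>(same_block P)\<^sup>* = same_block P \<union> Id\<close> by simp
    then show "p = q"
      using pq xy partition_on_block_eq[OF P(1)] by blast
  qed
  then show ?thesis
    using P(2) by (simp add: card_le_Suc0_iff_eq)
qed

lemma card_partition_le_Suc_card_edges: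
  assumes "finite X" "partition_on A P" "finite P" "\<forall>e\<in>X. psi e \<subseteq> A"
    and "\<forall>v\<in>A. \<forall>w\<in>A. (v, w) \<in> (same_block P \<union> adj X psi)\<^sup>*"
  shows "card P \<le> card X + 1"
  using assms
proof (induction X arbitrary: P rule: finite_induct)
  case empty
  then show ?case
    using card_le_one_if_connected_blocks by (simp add: adj_def)
next
  case (insert x X)
  have IH: "card P' \<le> card X + 1"
    if P': "partition_on A P'" "finite P'"
      and sub: "same_block P \<union> adj (insert x X) psi \<subseteq> same_block P' \<union> adj X psi" for P'
  proof (rule insert.IH[OF P'])
    show "\<forall>e\<in>X. psi e \<subseteq> A"
      using insert.prems(3) by simp
    show "\<forall>v\<in>A. \<forall>w\<in>A. (v, w) \<in> (same_block P' \<union> adj X psi)\<^sup>*"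
      using rtrancl_mono[OF sub] insert.prems(4) by blast
  qed
  show ?case
  proof (cases "\<exists>a b. psi x = {a, b}")
    case False
    then have "card P \<le> card X + 1"
      by (intro IH insert.prems) (simp add: adj_insert)
    then show ?thesis
      using insert.hyps by simp
  next
    case True
    then obtain a b where ab: "psi x = {a, b}" by blast
    then obtain p q where pq: "p \<in> P" "q \<in> P" "a \<in> p" "b \<in> q"
      using insert.prems(1,3) unfolding partition_on_def by blast
    define P' where "P' = insert (p \<union> q) (P - {p, q})"
    have "partition_on A P'"
      unfolding P'_def by (rule partition_on_merge[OF insert.prems(1) pq(1,2)])
    moreover have "finite P'"
      unfolding P'_def using insert.prems(2) by simp
    moreover have "same_block P \<union> adj (insert x X) psi \<subseteq> same_block P' \<union> adj X psi"
      using ab pq unfolding P'_def by (auto simp: adj_insert doubleton_eq_iff)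
    ultimately have "card P' \<le> card X + 1"
      by (rule IH)
    moreover have "card P \<le> card P' + 1"
      unfolding P'_def by (rule card_le_Suc_card_partition_merge[OF insert.prems(1,2) pq(1,2)])
    ultimately show ?thesis
      using insert.hyps by simp
  qed
qed

lemma card_vertices_le_Suc_card_edges:
  assumes "graph V E psi" "connected_graph V E psi"
  shows "card V \<le> card E + 1"
proof -
  let ?P = "(\<lambda>v. {v}) ` V"
  have "(adj E psi)\<^sup>* \<subseteq> (same_block ?P \<union> adj E psi)\<^sup>*"
    by (rule rtrancl_mono) blast
  then have "\<forall>v\<in>V. \<forall>w\<in>V. (v, w) \<in> (same_block ?P \<union> adj E psi)\<^sup>*"
    using assms(2) unfolding connected_graph_def by blast
  moreover have "finite E" "finite V" "\<forall>e\<in>E. psi e \<subseteq> V"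
    using assms(1) by (auto simp: graph_def)
  ultimately have "card ?P \<le> card E + 1"
    using partition_on_singletons[of V] by (intro card_partition_le_Suc_card_edges) simp_all
  then show ?thesis
    by (simp add: card_image)
qed

lemma components_eq_quotient:
  "components V' E' psi = V' // {(v, w). v \<in> V' \<and> w \<in> V' \<and> (v, w) \<in> (adj E' psi)\<^sup>*}"
  unfolding components_def quotient_def by auto

lemma partition_on_components: "partition_on V' (components V' E' psi)"
proof -
  have "sym ((adj E' psi)\<^sup>*)"
    by (rule sym_rtrancl[OF sym_adj])
  then have "equiv V' {(v, w). v \<in> V' \<and> w \<in> V' \<and> (v, w) \<in> (adj E' psi)\<^sup>*}"
    by (auto simp: equiv_def refl_on_def sym_def trans_def intro: rtrancl_trans)
  then show ?thesis
    unfolding components_eq_quotient by (rule partition_on_quotient)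
qed

lemma edge_subset_component:
  assumes "e \<in> E'" "psi e = {a, b}" "a \<in> V'" "b \<in> V'"
  shows "\<exists>C\<in>components V' E' psi. psi e \<subseteq> C"
proof -
  have "(a, b) \<in> adj E' psi"
    using assms(1,2) unfolding adj_def by blast
  then have "psi e \<subseteq> {w \<in> V'. (a, w) \<in> (adj E' psi)\<^sup>*}"
    using assms(2-4) by auto
  then show ?thesis
    using assms(3) unfolding components_def by blast
qed

lemma sum_card_edges_components:
  assumes "finite V'" "finite E'" "\<forall>e\<in>E'. \<exists>a b. psi e = {a, b} \<and> a \<in> V' \<and> b \<in> V'"
  shows "(\<Sum>C\<in>components V' E' psi. card {e \<in> E'. psi e \<subseteq> C}) = card E'"
proof -
  let ?K = "components V' E' psi"
  have K: "partition_on V' ?K"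
    by (rule partition_on_components)
  have "card (\<Union>C\<in>?K. {e \<in> E'. psi e \<subseteq> C}) = (\<Sum>C\<in>?K. card {e \<in> E'. psi e \<subseteq> C})"
  proof (rule card_UN_disjoint)
    show "finite ?K"
      using finite_elements[OF assms(1) K] .
    show "\<forall>C\<in>?K. finite {e \<in> E'. psi e \<subseteq> C}"
      using assms(2) by simp
    show "\<forall>C\<in>?K. \<forall>C'\<in>?K. C \<noteq> C' \<longrightarrow> {e \<in> E'. psi e \<subseteq> C} \<inter> {e \<in> E'. psi e \<subseteq> C'} = {}"
      using assms(3) partition_on_block_eq[OF K] by fastforce
  qed
  moreover have "(\<Union>C\<in>?K. {e \<in> E'. psi e \<subseteq> C}) = E'"
    using assms(3) edge_subset_component by fastforce
  ultimately show ?thesis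
    by simp
qed

lemma sum_genus_components:
  assumes "finite V'" "finite E'" "\<forall>e\<in>E'. \<exists>a b. psi e = {a, b} \<and> a \<in> V' \<and> b \<in> V'"
  shows "(\<Sum>C\<in>components V' E' psi. genus C {e \<in> E'. psi e \<subseteq> C} + 1) =
    int (card E') - int (card V') + 2 * int (card (components V' E' psi))"
proof -
  let ?K = "components V' E' psi"
  have K: "partition_on V' ?K"
    by (rule partition_on_components)
  have "card V' = (\<Sum>C\<in>?K. card C)"
  proof (rule product_partition[OF K])
    show "finite C" if "C \<in> ?K" for C
      using finite_subset[OF Union_upper[OF that]] assms(1) partition_onD1[OF K] by simp
  qed
  have "(\<Sum>C\<in>?K. genus C {e \<in> E'. psi e \<subseteq> C} + 1) =
      (\<Sum>C\<in>?K. int (card {e \<in> E'. psi e \<subseteq> C})) - (\<Sum>C\<in>?K. int (card C)) + (\<Sum>C\<in>?K. 2)"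
    unfolding genus_def sum_subtractf[symmetric] sum.distrib[symmetric] by (rule sum.cong) simp_all
  also have "\<dots> = int (card E') - int (card V') + 2 * int (card ?K)"
    unfolding of_nat_sum[symmetric] sum_card_edges_components[OF assms] \<open>card V' = (\<Sum>C\<in>?K. card C)\<close>
    by simp
  finally show ?thesis .
qed

lemma involution_transversal:
  assumes inv: "\<forall>a\<in>A. \<sigma> a \<in> A \<and> \<sigma> a \<noteq> a \<and> \<sigma> (\<sigma> a) = a" and e: "e \<in> A"
  obtains X where "X \<subseteq> A" "e \<in> X" "\<forall>a\<in>A. a \<in> X \<longleftrightarrow> \<sigma> a \<notin> X"
proof
  define rep where "rep a = (if a \<in> {e, \<sigma> e} then e else SOME z. z \<in> {a, \<sigma> a})" for a
  have rep_\<sigma>: "rep (\<sigma> a) = rep a" if "a \<in> A" for a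
  proof -
    have "\<sigma> (\<sigma> a) = a" "\<sigma> (\<sigma> e) = e"
      using inv that e by auto
    then have "{\<sigma> a, \<sigma> (\<sigma> a)} = {a, \<sigma> a}"
      by (simp add: insert_commute)
    moreover have "\<sigma> a \<in> {e, \<sigma> e} \<longleftrightarrow> a \<in> {e, \<sigma> e}"
      using \<open>\<sigma> (\<sigma> a) = a\<close> \<open>\<sigma> (\<sigma> e) = e\<close> by (metis insert_iff singleton_iff)
    ultimately show ?thesis
      unfolding rep_def by simp
  qed
  have rep_in: "rep a \<in> {a, \<sigma> a}" if "a \<in> A" for a
  proof (cases "a \<in> {e, \<sigma> e}")
    case True
    then show ?thesis
      using inv[rule_format, OF e] unfolding rep_def by auto
  next
    case False
    then show ?thesis
      using someI[of "\<lambda>z. z \<in> {a, \<sigma> a}" a] unfolding rep_def by simp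
  qed
  let ?X = "{a \<in> A. rep a = a}"
  show "?X \<subseteq> A" "e \<in> ?X"
    using e unfolding rep_def by auto
  show "\<forall>a\<in>A. a \<in> ?X \<longleftrightarrow> \<sigma> a \<notin> ?X"
  proof
    fix a assume "a \<in> A"
    then show "a \<in> ?X \<longleftrightarrow> \<sigma> a \<notin> ?X"
      using inv[rule_format, OF \<open>a \<in> A\<close>] rep_in[of a] rep_\<sigma>[of a] by auto
  qed
qed

lemma card_involution_transversal:
  assumes inv: "\<forall>a\<in>A. \<sigma> a \<in> A \<and> \<sigma> a \<noteq> a \<and> \<sigma> (\<sigma> a) = a" and "finite A"
    and X: "X \<subseteq> A" "\<forall>a\<in>A. a \<in> X \<longleftrightarrow> \<sigma> a \<notin> X"
  shows "card A = 2 * card X"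
proof -
  have "A = X \<union> \<sigma> ` X"
  proof (intro equalityI subsetI)
    fix a assume a: "a \<in> A"
    show "a \<in> X \<union> \<sigma> ` X"
    proof (cases "a \<in> X")
      case False
      then have "\<sigma> a \<in> X"
        using X(2) a by blast
      then have "\<sigma> (\<sigma> a) \<in> \<sigma> ` X"
        by (rule imageI)
      then show ?thesis
        using inv a by simp
    qed simp
  next
    fix a assume "a \<in> X \<union> \<sigma> ` X"
    then show "a \<in> A"
      using inv X(1) by blast
  qed
  moreover have "X \<inter> \<sigma> ` X = {}"
    using X by blast
  moreover have "inj_on \<sigma> X"
    using inv X(1) by (metis inj_on_def subsetD)
  moreover have "finite X"
    using X(1) assms(2) by (rule finite_subset)
  ultimately show ?thesis
    by (simp add: card_Un_disjoint card_image)
qed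

lemma laplacian_add:
  "laplacian E psi (\<lambda>w. f w + g w) v = laplacian E psi f v + laplacian E psi g v"
  unfolding laplacian_def by (simp add: sum.distrib[symmetric] algebra_simps)

lemma lin_equiv_refl: "lin_equiv V E psi D D"
  unfolding lin_equiv_def laplacian_def by (intro exI[of _ "\<lambda>_. 0"]) simp

lemma lin_equiv_add:
  assumes "lin_equiv V E psi D1 D1'" "lin_equiv V E psi D2 D2'"
  shows "lin_equiv V E psi (\<lambda>v. D1 v + D2 v) (\<lambda>v. D1' v + D2' v)"
proof -
  obtain f g where f: "\<forall>v\<in>V. D1' v - D1 v = laplacian E psi f v"
    and g: "\<forall>v\<in>V. D2' v - D2 v = laplacian E psi g v"
    using assms unfolding lin_equiv_def by blast
  have "(D1' v + D2' v) - (D1 v + D2 v) = laplacian E psi (\<lambda>w. f w + g w) v" if "v \<in> V" for v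
    using f[rule_format, OF that] g[rule_format, OF that] laplacian_add[of E psi f g v] by linarith
  then show ?thesis
    unfolding lin_equiv_def by blast
qed

lemma lin_equiv_trans:
  assumes "lin_equiv V E psi D1 D2" "lin_equiv V E psi D2 D3"
  shows "lin_equiv V E psi D1 D3"
proof -
  obtain f g where f: "\<forall>v\<in>V. D2 v - D1 v = laplacian E psi f v"
    and g: "\<forall>v\<in>V. D3 v - D2 v = laplacian E psi g v"
    using assms unfolding lin_equiv_def by blast
  have "D3 v - D1 v = laplacian E psi (\<lambda>w. f w + g w) v" if "v \<in> V" for v
    using f[rule_format, OF that] g[rule_format, OF that] laplacian_add[of E psi f g v] by linarith
  then show ?thesis
    unfolding lin_equiv_def by blast
qed

lemma laplacian_singleton:
  "laplacian {e} psi f v = (if v \<in> psi e then \<Sum>w\<in>psi e - {v}. f w - f v else 0)"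
  unfolding laplacian_def by (cases "v \<in> psi e") (simp_all add: Collect_conv_if)

lemma laplacian_eq_sum_edges:
  assumes "finite E"
  shows "laplacian E psi f v = (\<Sum>e\<in>E. laplacian {e} psi f v)"
  unfolding laplacian_def[of E] laplacian_singleton by (rule sum.inter_filter[OF assms])

lemma laplacian_edge:
  assumes "psi c = {a, b}" "a \<noteq> b"
  shows "laplacian {c} psi f v = of_bool (v = a) * (f b - f a) + of_bool (v = b) * (f a - f b)"
proof -
  consider "v = a" | "v = b" | "v \<notin> psi c"
    using assms(1) by auto
  then show ?thesis
  proof cases
    case 1
    then have "psi c - {v} = {b}"
      using assms by auto
    then show ?thesis
      using 1 assms by (simp add: laplacian_singleton)
  next
    case 2
    then have "psi c - {v} = {a}"
      using assms by auto
    then show ?thesis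
      using 2 assms by (simp add: laplacian_singleton)
  next
    case 3
    then show ?thesis
      using assms(1) by (simp add: laplacian_singleton)
  qed
qed

lemma laplacian_edge_const:
  assumes "\<forall>a\<in>psi e. \<forall>b\<in>psi e. f a = f b"
  shows "laplacian {e} psi f v = 0"
proof -
  have "(\<Sum>w\<in>psi e - {v}. f w - f v) = 0" if "v \<in> psi e"
    using assms that by (intro sum.neutral ballI) (metis DiffD1 diff_self)
  then show ?thesis
    unfolding laplacian_singleton by simp
qed

lemma laplacian_indicator_cut:
  assumes "finite E" "C \<subseteq> E"
    and uncut: "\<forall>e\<in>E - C. psi e \<subseteq> S \<or> psi e \<inter> S = {}"
    and cut: "\<forall>c\<in>C. psi c = {inn c, out c} \<and> inn c \<in> S \<and> out c \<notin> S"
  shows "laplacian E psi (\<lambda>w. of_bool (w \<in> S)) v = (\<Sum>c\<in>C. of_bool (v = out c) - of_bool (v = inn c))"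
proof -
  let ?f = "\<lambda>w. of_bool (w \<in> S) :: int"
  have "laplacian E psi ?f v = (\<Sum>c\<in>C. laplacian {c} psi ?f v) + (\<Sum>e\<in>E - C. laplacian {e} psi ?f v)"
    unfolding laplacian_eq_sum_edges[OF assms(1)] sum.subset_diff[OF assms(2,1)] by (rule add.commute)
  also have "(\<Sum>e\<in>E - C. laplacian {e} psi ?f v) = 0"
    using uncut by (intro sum.neutral ballI laplacian_edge_const) auto
  also have "(\<Sum>c\<in>C. laplacian {c} psi ?f v) = (\<Sum>c\<in>C. of_bool (v = out c) - of_bool (v = inn c))"
  proof (rule sum.cong[OF refl])
    fix c assume "c \<in> C"
    then have "psi c = {inn c, out c}" "inn c \<in> S" "out c \<notin> S"
      using cut by auto
    then show "laplacian {c} psi ?f v = of_bool (v = out c) - of_bool (v = inn c)"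
      by (subst laplacian_edge) auto
  qed
  finally show ?thesis
    by simp
qed

lemma graph_edge_doubleton:
  assumes "graph V E psi" "e \<in> E"
  obtains a b where "psi e = {a, b}" "a \<in> V" "b \<in> V"
proof -
  have fin: "finite (psi e)"
    using assms finite_subset unfolding graph_def by blast
  have "psi e \<subseteq> V" "psi e \<noteq> {}" "card (psi e) \<le> 2"
    using assms unfolding graph_def by auto
  moreover have "card (psi e) \<noteq> 0"
    using fin \<open>psi e \<noteq> {}\<close> by simp
  ultimately have "card (psi e) = 1 \<or> card (psi e) = 2"
    by linarith
  then obtain a b where "psi e = {a, b}"
    by (metis card_1_singletonE card_2_iff insert_absorb2 One_nat_def)
  with \<open>psi e \<subseteq> V\<close> show thesis
    using that by blast
qed

locale real_M_graph =
  fixes V :: "'v set" and E :: "'e set" and psi :: "'e \<Rightarrow> 'v set"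
    and sv :: "'v \<Rightarrow> 'v" and se :: "'e \<Rightarrow> 'e"
  assumes graph: "graph V E psi"
    and connected: "connected_graph V E psi"
    and real_structure: "real_structure V E psi sv se"
    and M_graph: "M_graph V E psi sv se"
begin

abbreviation "VR \<equiv> real_vertices V sv"
abbreviation "ER \<equiv> real_edges V E psi sv se"
abbreviation "real_components \<equiv> components VR ER psi"

definition nonreal_edges :: "'e set" where
  "nonreal_edges = {e \<in> E. se e \<noteq> e}"

definition conj_pairs :: "'v set set" where
  "conj_pairs = (\<lambda>v. {v, sv v}) ` (V - VR)"

definition blocks :: "'v set set" where
  "blocks = real_components \<union> conj_pairs"

lemma finite_V: "finite V" and finite_E: "finite E"
  using graph unfolding graph_def by auto

lemma edge_subset_V: "e \<in> E \<Longrightarrow> psi e \<subseteq> V"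
  using graph unfolding graph_def by auto

lemma edge_doubleton:
  assumes "e \<in> E"
  obtains a b where "psi e = {a, b}" "a \<in> V" "b \<in> V"
  using graph_edge_doubleton[OF graph assms] by blast

lemma sv_in_V: "v \<in> V \<Longrightarrow> sv v \<in> V" and sv_sv: "v \<in> V \<Longrightarrow> sv (sv v) = v"
  and se_in_E: "e \<in> E \<Longrightarrow> se e \<in> E" and se_se: "e \<in> E \<Longrightarrow> se (se e) = e"
  and psi_se: "e \<in> E \<Longrightarrow> psi (se e) = sv ` psi e"
  using real_structure unfolding real_structure_def by auto

lemma nonreal_sv:
  assumes "v \<in> V - VR"
  shows "sv v \<in> V - VR" "sv v \<noteq> v"
  using assms sv_in_V sv_sv unfolding real_vertices_def by force+

lemma real_edge_ends:
  assumes "e \<in> E" "se e = e"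
  shows "psi e \<subseteq> VR"
  using assms M_graph unfolding M_graph_def isolated_real_edges_def by blast

lemma E_eq_real_edges_Un_nonreal: "E = ER \<union> nonreal_edges" "ER \<inter> nonreal_edges = {}"
  using real_edge_ends unfolding real_edges_def nonreal_edges_def by auto

lemma nonreal_edges_involution:
  "\<forall>e\<in>nonreal_edges. se e \<in> nonreal_edges \<and> se e \<noteq> e \<and> se (se e) = e"
  using se_in_E se_se unfolding nonreal_edges_def by force

lemma partition_on_conj_pairs: "partition_on (V - VR) conj_pairs"
proof (rule partition_onI)
  show "\<Union>conj_pairs = V - VR"
    using nonreal_sv unfolding conj_pairs_def by blast
  show "{} \<notin> conj_pairs"
    unfolding conj_pairs_def by blast
  have "{w, sv w} = {v, sv v}" if "v \<in> V" "w \<in> {v, sv v}" for v w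
    using that sv_sv by auto
  then show "disjnt p q" if "p \<in> conj_pairs" "q \<in> conj_pairs" "p \<noteq> q" for p q
    using that unfolding conj_pairs_def disjnt_def by blast
qed

lemma card_V: "card V = card VR + 2 * card conj_pairs"
proof -
  have "card (V - VR) = (\<Sum>p\<in>conj_pairs. card p)"
    by (rule product_partition[OF partition_on_conj_pairs]) (auto simp: conj_pairs_def)
  also have "\<dots> = (\<Sum>p\<in>conj_pairs. 2)"
  proof (rule sum.cong[OF refl])
    fix p assume "p \<in> conj_pairs"
    then obtain v where "v \<in> V - VR" "p = {v, sv v}"
      unfolding conj_pairs_def by blast
    then show "card p = 2"
      using nonreal_sv(2)[of v] by auto
  qed
  also have "\<dots> = 2 * card conj_pairs"
    by simp
  finally have "card (V - VR) = 2 * card conj_pairs" .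
  moreover have "V \<inter> VR = VR"
    unfolding real_vertices_def by blast
  ultimately show ?thesis
    using card_Int_Diff[OF finite_V, of VR] by simp
qed

lemma real_edge_doubleton:
  "\<forall>e\<in>ER. \<exists>a b. psi e = {a, b} \<and> a \<in> VR \<and> b \<in> VR"
  using edge_doubleton unfolding real_edges_def by (metis insert_subset mem_Collect_eq)

lemma finite_VR: "finite VR" and finite_ER: "finite ER"
  and finite_nonreal_edges: "finite nonreal_edges"
  using finite_V finite_E unfolding real_vertices_def real_edges_def nonreal_edges_def by auto

lemma partition_on_blocks: "partition_on V blocks"
proof -
  have K: "partition_on VR real_components"
    by (rule partition_on_components)
  note P = partition_on_conj_pairs
  have "VR \<subseteq> V"
    unfolding real_vertices_def by blast
  then have "\<Union>blocks = V"
    unfolding blocks_def using partition_onD1[OF K] partition_onD1[OF P] by auto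
  moreover have "disjoint blocks"
    unfolding blocks_def using partition_onD1[OF K] partition_onD1[OF P]
    by (intro disjoint_union partition_onD2[OF K] partition_onD2[OF P]) auto
  moreover have "{} \<notin> blocks"
    unfolding blocks_def using partition_onD3[OF K] partition_onD3[OF P] by simp
  ultimately show ?thesis
    unfolding partition_on_def by simp
qed

lemma card_blocks: "card blocks = card real_components + card conj_pairs"
proof -
  have "real_components \<inter> conj_pairs = {}"
  proof (rule ccontr)
    assume "real_components \<inter> conj_pairs \<noteq> {}"
    then obtain p x where "p \<in> real_components" "p \<in> conj_pairs" "x \<in> p"
      using partition_onD3[OF partition_on_conj_pairs] by (metis all_not_in_conv disjoint_iff)
    then show False
      using partition_onD1[OF partition_on_components[of VR ER psi]]
        partition_onD1[OF partition_on_conj_pairs] by blast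
  qed
  moreover have "finite real_components" "finite conj_pairs"
    using finite_elements[OF finite_VR partition_on_components]
      finite_elements[OF _ partition_on_conj_pairs] finite_V by auto
  ultimately show ?thesis
    unfolding blocks_def by (simp add: card_Un_disjoint)
qed

lemma card_blocks_M_graph: "2 * card blocks = card nonreal_edges + 2"
proof -
  have "isolated_real_edges V E psi sv se = {}" "s_inv V E psi sv se = genus V E + 1"
    using M_graph unfolding M_graph_def by auto
  then have "int (card ER) - int (card VR) + 2 * int (card real_components) =
      int (card E) - int (card V) + 2"
    using sum_genus_components[OF finite_VR finite_ER real_edge_doubleton]
    unfolding s_inv_def genus_def by simp
  moreover have "card E = card ER + card nonreal_edges"
    using card_Un_disjoint[OF finite_ER finite_nonreal_edges] E_eq_real_edges_Un_nonreal by simp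
  ultimately show ?thesis
    using card_V card_blocks by linarith
qed

lemma real_vertex_exists: "VR \<noteq> {}"
proof
  assume VR: "VR = {}"
  then have "ER = {}"
    using real_edge_doubleton by blast
  then have "card E = card nonreal_edges"
    using E_eq_real_edges_Un_nonreal by simp
  moreover have "real_components = {}"
    using VR partition_on_components[of VR ER psi] partition_on_empty by metis
  ultimately have "card V = card E + 2"
    using card_V card_blocks card_blocks_M_graph VR by simp
  then show False
    using card_vertices_le_Suc_card_edges[OF graph connected] by simp
qed

lemma same_block_sv:
  assumes "v \<in> V"
  shows "(v, sv v) \<in> same_block blocks"
proof (cases "v \<in> VR")
  case True
  then obtain C where "C \<in> real_components" "v \<in> C"
    using partition_onD1[OF partition_on_components[of VR ER psi]] by blast
  moreover have "sv v = v"
    using True unfolding real_vertices_def by simp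
  ultimately show ?thesis
    unfolding blocks_def by (intro same_blockI[of C]) simp_all
next
  case False
  then have "{v, sv v} \<in> blocks"
    using assms unfolding blocks_def conj_pairs_def by blast
  then show ?thesis
    by (rule same_blockI) simp_all
qed

lemma real_edge_in_block:
  assumes "e \<in> ER" "psi e = {a, b}"
  shows "(a, b) \<in> same_block blocks"
proof -
  have "psi e \<subseteq> VR"
    using assms(1) unfolding real_edges_def by blast
  then have "a \<in> VR" "b \<in> VR"
    using assms(2) by auto
  then obtain C where "C \<in> real_components" "psi e \<subseteq> C"
    using edge_subset_component[of e ER psi a b VR] assms by blast
  then show ?thesis
    using assms(2) unfolding blocks_def by (intro same_blockI[of C]) auto
qed

lemma nonreal_edge_ends_related:
  assumes X: "X \<subseteq> nonreal_edges" "\<forall>a\<in>nonreal_edges. a \<in> X \<longleftrightarrow> se a \<notin> X"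
  shows "adj (E - {e, se e}) psi \<subseteq> (same_block blocks \<union> adj (X - {e}) psi)\<^sup>*"
proof
  fix p assume "p \<in> adj (E - {e, se e}) psi"
  then obtain a b e' where p: "p = (a, b)" "e' \<in> E" "e' \<noteq> e" "e' \<noteq> se e" "psi e' = {a, b}"
    unfolding adj_def by blast
  let ?R = "same_block blocks \<union> adj (X - {e}) psi"
  have ab: "a \<in> V" "b \<in> V"
    using p(2,5) edge_subset_V by auto
  have "e' \<in> ER \<or> e' \<in> nonreal_edges"
    using p(2) E_eq_real_edges_Un_nonreal(1) by auto
  then consider "e' \<in> ER" | "e' \<in> X" | "se e' \<in> X"
    using X(2) by (cases "e' \<in> X") auto
  then show "p \<in> ?R\<^sup>*"
  proof cases
    case 1
    then show ?thesis
      using real_edge_in_block[OF 1 p(5)] p(1) by (simp add: r_into_rtrancl)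
  next
    case 2
    then have "(a, b) \<in> adj (X - {e}) psi"
      using p unfolding adj_def by blast
    then show ?thesis
      using p(1) by (simp add: r_into_rtrancl)
  next
    case 3
    moreover have "se e' \<noteq> e"
      using p(2,4) se_se by metis
    moreover have "psi (se e') = {sv a, sv b}"
      using psi_se[OF p(2)] p(5) by simp
    ultimately have "(sv a, sv b) \<in> adj (X - {e}) psi"
      unfolding adj_def by blast
    have "(a, sv a) \<in> ?R\<^sup>*"
      using same_block_sv[OF ab(1)] by (simp add: r_into_rtrancl)
    also have "(sv a, sv b) \<in> ?R\<^sup>*"
      using \<open>(sv a, sv b) \<in> adj (X - {e}) psi\<close> by (simp add: r_into_rtrancl)
    also have "(sv b, b) \<in> ?R\<^sup>*"
      using same_block_sv[OF ab(2)] by auto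
    finally show ?thesis
      using p(1) by simp
  qed
qed

text \<open>By the M-graph count \<open>X\<close> has \<open>card blocks - 1\<close> edges, too few to connect the contracted
  graph once one of them is dropped.\<close>

lemma transversal_minus_edge_disconnected:
  assumes X: "X \<subseteq> nonreal_edges" "\<forall>a\<in>nonreal_edges. a \<in> X \<longleftrightarrow> se a \<notin> X" "e \<in> X"
  shows "\<exists>v\<in>V. \<exists>w\<in>V. (v, w) \<notin> (same_block blocks \<union> adj (X - {e}) psi)\<^sup>*"
proof (rule ccontr)
  assume "\<not> ?thesis"
  then have "\<forall>v\<in>V. \<forall>w\<in>V. (v, w) \<in> (same_block blocks \<union> adj (X - {e}) psi)\<^sup>*"
    by blast
  moreover have "finite X"
    using X(1) finite_nonreal_edges by (rule finite_subset)
  moreover have "\<forall>a\<in>X - {e}. psi a \<subseteq> V"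
    using X(1) edge_subset_V unfolding nonreal_edges_def by blast
  ultimately have "card blocks \<le> card (X - {e}) + 1"
    using partition_on_blocks finite_elements[OF finite_V partition_on_blocks]
    by (intro card_partition_le_Suc_card_edges) simp_all
  moreover have "card nonreal_edges = 2 * card X"
    using card_involution_transversal[OF nonreal_edges_involution finite_nonreal_edges X(1,2)] .
  moreover have "card (X - {e}) + 1 = card X"
    using card.remove[OF \<open>finite X\<close> X(3)] by simp
  ultimately show False
    using card_blocks_M_graph by linarith
qed

lemma adj_subset_contracted_if_joined:
  assumes X: "X \<subseteq> nonreal_edges" "\<forall>a\<in>nonreal_edges. a \<in> X \<longleftrightarrow> se a \<notin> X"
    and e: "e \<in> E" "psi e = {u, x}"
    and ux: "(u, x) \<in> (same_block blocks \<union> adj (X - {e}) psi)\<^sup>*"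
  shows "adj E psi \<subseteq> (same_block blocks \<union> adj (X - {e}) psi)\<^sup>*"
proof
  let ?R = "same_block blocks \<union> adj (X - {e}) psi"
  have sym_R: "sym (?R\<^sup>*)"
    by (intro sym_rtrancl sym_Un sym_adj) (auto simp: sym_def)
  have uV: "u \<in> V" "x \<in> V"
    using e edge_subset_V by auto
  have "(sv u, u) \<in> ?R\<^sup>*"
    using same_block_sv[OF uV(1)] by auto
  also note ux
  also have "(x, sv x) \<in> ?R\<^sup>*"
    using same_block_sv[OF uV(2)] by auto
  finally have svux: "(sv u, sv x) \<in> ?R\<^sup>*" .
  fix p assume "p \<in> adj E psi"
  then obtain a b e' where p: "p = (a, b)" "e' \<in> E" "psi e' = {a, b}"
    unfolding adj_def by blast
  show "p \<in> ?R\<^sup>*"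
  proof (cases "e' \<in> {e, se e}")
    case True
    then have "{a, b} = {u, x} \<or> {a, b} = {sv u, sv x}"
      using p(3) e psi_se by auto
    then show ?thesis
      using p(1) ux svux sym_R by (auto simp: doubleton_eq_iff dest: symD)
  next
    case False
    then show ?thesis
      using nonreal_edge_ends_related[OF X] p unfolding adj_def by blast
  qed
qed

lemma conj_edge_pair_separates:
  assumes e: "e \<in> E" "psi e = {u, x}" and u: "u \<in> V - VR"
    and w: "w1 \<in> {u, sv u}" "w2 \<in> {x, sv x}"
  shows "(w1, w2) \<notin> (adj (E - {e, se e}) psi)\<^sup>*"
proof
  assume path: "(w1, w2) \<in> (adj (E - {e, se e}) psi)\<^sup>*"
  have "se e \<noteq> e"
    using real_edge_ends[OF e(1)] e(2) u by auto
  then have "e \<in> nonreal_edges"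
    using e(1) unfolding nonreal_edges_def by simp
  then obtain X where
    X: "X \<subseteq> nonreal_edges" "e \<in> X" "\<forall>a\<in>nonreal_edges. a \<in> X \<longleftrightarrow> se a \<notin> X"
    using involution_transversal[OF nonreal_edges_involution] by blast
  let ?R = "same_block blocks \<union> adj (X - {e}) psi"
  have uV: "u \<in> V" "x \<in> V"
    using e edge_subset_V by auto
  have "(u, w1) \<in> ?R\<^sup>*"
    using w(1) same_block_sv[OF uV(1)] by auto
  also have "(w1, w2) \<in> ?R\<^sup>*"
    using rtrancl_subset_rtrancl[OF nonreal_edge_ends_related[OF X(1,3)]] path by blast
  also have "(w2, x) \<in> ?R\<^sup>*"
    using w(2) same_block_sv[OF uV(2)] by auto
  finally have "adj E psi \<subseteq> ?R\<^sup>*"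
    by (rule adj_subset_contracted_if_joined[OF X(1,3) e])
  then have "\<forall>v\<in>V. \<forall>w\<in>V. (v, w) \<in> ?R\<^sup>*"
    using connected rtrancl_subset_rtrancl unfolding connected_graph_def by blast
  then show False
    using transversal_minus_edge_disconnected[OF X(1,3,2)] by blast
qed

definition orbit_divisor :: "'v \<Rightarrow> 'v \<Rightarrow> int" where
  "orbit_divisor u w = of_bool (w = u) + of_bool (w = sv u)"

text \<open>Fire the set of vertices reachable from \<open>u\<close> or \<open>sv u\<close> without using \<open>e\<close> or \<open>se e\<close>; by
  the separation lemma its only boundary edges are \<open>e\<close> and \<open>se e\<close>.\<close>

lemma lin_equiv_orbit_divisor_edge:
  assumes e: "e \<in> E" "psi e = {u, x}" and u: "u \<in> V - VR"
  shows "lin_equiv V E psi (orbit_divisor u) (orbit_divisor x)"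
proof -
  let ?E0 = "E - {e, se e}"
  define S where "S = {w. \<exists>w0\<in>{u, sv u}. (w0, w) \<in> (adj ?E0 psi)\<^sup>*}"
  define inn where "inn c = (if c = e then u else sv u)" for c
  define out where "out c = (if c = e then x else sv x)" for c
  have "se e \<noteq> e"
    using real_edge_ends[OF e(1)] e(2) u by auto
  have se_e: "se e \<in> E" "psi (se e) = {sv u, sv x}"
    using se_in_E[OF e(1)] psi_se[OF e(1)] e(2) by auto
  have in_S: "u \<in> S" "sv u \<in> S"
    unfolding S_def by auto
  have notin_S: "x \<notin> S" "sv x \<notin> S"
    using conj_edge_pair_separates[OF e u] unfolding S_def by blast+
  have S_closed: "w' \<in> S" if "w \<in> S" "(w, w') \<in> adj ?E0 psi" for w w'
    using that unfolding S_def by (blast intro: rtrancl_into_rtrancl)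
  have uncut: "\<forall>e'\<in>E - {e, se e}. psi e' \<subseteq> S \<or> psi e' \<inter> S = {}"
  proof
    fix e' assume e': "e' \<in> E - {e, se e}"
    then obtain a b where ab: "psi e' = {a, b}"
      using edge_doubleton by blast
    then have "(a, b) \<in> adj ?E0 psi"
      using e' unfolding adj_def by blast
    then have "(b, a) \<in> adj ?E0 psi"
      by (rule symD[OF sym_adj])
    then have "a \<in> S \<longleftrightarrow> b \<in> S"
      using S_closed \<open>(a, b) \<in> adj ?E0 psi\<close> by blast
    then show "psi e' \<subseteq> S \<or> psi e' \<inter> S = {}"
      using ab by auto
  qed
  have cut: "\<forall>c\<in>{e, se e}. psi c = {inn c, out c} \<and> inn c \<in> S \<and> out c \<notin> S"
    using e(2) se_e(2) in_S notin_S \<open>se e \<noteq> e\<close> unfolding inn_def out_def by auto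
  have "orbit_divisor x v - orbit_divisor u v = laplacian E psi (\<lambda>w. of_bool (w \<in> S)) v" for v
    using laplacian_indicator_cut[OF finite_E _ uncut cut] e(1) se_e(1) \<open>se e \<noteq> e\<close>
    unfolding orbit_divisor_def inn_def out_def by simp
  then show ?thesis
    unfolding lin_equiv_def by blast
qed

definition equiv_totally_real :: "('v \<Rightarrow> int) \<Rightarrow> bool" where
  "equiv_totally_real D \<longleftrightarrow>
     (\<exists>D'. divisor V D' \<and> effective V D' \<and> totally_real V sv D' \<and> lin_equiv V E psi D D')"

lemma equiv_totally_real_self:
  "divisor V D \<Longrightarrow> effective V D \<Longrightarrow> totally_real V sv D \<Longrightarrow> equiv_totally_real D"
  unfolding equiv_totally_real_def using lin_equiv_refl by blast

lemma equiv_totally_real_lin_equiv: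
  "lin_equiv V E psi D1 D2 \<Longrightarrow> equiv_totally_real D2 \<Longrightarrow> equiv_totally_real D1"
  unfolding equiv_totally_real_def using lin_equiv_trans by blast

lemma equiv_totally_real_add:
  assumes "equiv_totally_real D1" "equiv_totally_real D2"
  shows "equiv_totally_real (\<lambda>v. D1 v + D2 v)"
proof -
  obtain D1' D2' where D1': "divisor V D1'" "effective V D1'" "totally_real V sv D1'" "lin_equiv V E psi D1 D1'"
    and D2': "divisor V D2'" "effective V D2'" "totally_real V sv D2'" "lin_equiv V E psi D2 D2'"
    using assms unfolding equiv_totally_real_def by blast
  have "divisor V (\<lambda>v. D1' v + D2' v)" "effective V (\<lambda>v. D1' v + D2' v)"
    using D1' D2' unfolding divisor_def effective_def by auto
  moreover have "totally_real V sv (\<lambda>v. D1' v + D2' v)"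
    using D1'(3) D2'(3) unfolding totally_real_def real_divisor_def by fastforce
  ultimately show ?thesis
    using lin_equiv_add[OF D1'(4) D2'(4)] unfolding equiv_totally_real_def by blast
qed

lemma equiv_totally_real_orbit_divisor_real:
  assumes "u \<in> VR"
  shows "equiv_totally_real (orbit_divisor u)"
proof (rule equiv_totally_real_self)
  have u: "u \<in> V" "sv u = u"
    using assms unfolding real_vertices_def by auto
  have orb: "orbit_divisor u = (\<lambda>w. 2 * of_bool (w = u))"
    using u(2) unfolding orbit_divisor_def by auto
  have "sv w = u \<longleftrightarrow> w = u" if "w \<in> V" for w
    using that u sv_sv by metis
  then show "divisor V (orbit_divisor u)" "effective V (orbit_divisor u)"
    "totally_real V sv (orbit_divisor u)"
    using u(1) assms unfolding orb divisor_def effective_def totally_real_def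
      real_divisor_def by auto
qed

lemma equiv_totally_real_orbit_divisor:
  assumes "u \<in> V"
  shows "equiv_totally_real (orbit_divisor u)"
proof -
  obtain r where r: "r \<in> VR"
    using real_vertex_exists by blast
  then have "(u, r) \<in> (adj E psi)\<^sup>*"
    using connected assms unfolding connected_graph_def real_vertices_def by blast
  then show ?thesis
  proof (induction rule: converse_rtrancl_induct)
    case base
    then show ?case
      using r by (rule equiv_totally_real_orbit_divisor_real)
  next
    case (step u y)
    then obtain e where e: "e \<in> E" "psi e = {u, y}"
      unfolding adj_def by blast
    then have "u \<in> V"
      using edge_subset_V by blast
    show ?case
    proof (cases "u \<in> VR")
      case True
      then show ?thesis
        by (rule equiv_totally_real_orbit_divisor_real)
    next
      case False
      then have "lin_equiv V E psi (orbit_divisor u) (orbit_divisor y)"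
        using lin_equiv_orbit_divisor_edge[OF e] \<open>u \<in> V\<close> by blast
      then show ?thesis
        using step.IH by (rule equiv_totally_real_lin_equiv)
    qed
  qed
qed

lemma totally_real_if_nonpos_nonreal:
  assumes "effective V D" "real_divisor V sv D" "\<forall>u\<in>V - VR. D u \<le> 0"
  shows "totally_real V sv D"
proof -
  have "v \<in> VR" if "v \<in> V" "D v \<noteq> 0" for v
    using assms(1,3) that unfolding effective_def by force
  then show ?thesis
    using assms(2) unfolding totally_real_def by blast
qed

lemma orbit_divisor_nonreal:
  assumes "u \<in> V - VR"
  shows "orbit_divisor u w = (if w = u \<or> w = sv u then 1 else 0)"
  using nonreal_sv(2)[OF assms] unfolding orbit_divisor_def by auto

lemma real_divisor_diff_orbit_divisor:
  assumes D: "divisor V D" "effective V D" "real_divisor V sv D" and u: "u \<in> V - VR" "D u > 0"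
  shows "divisor V (\<lambda>w. D w - orbit_divisor u w)" "effective V (\<lambda>w. D w - orbit_divisor u w)"
    "real_divisor V sv (\<lambda>w. D w - orbit_divisor u w)"
proof -
  have "sv u \<in> V" "D (sv u) = D u"
    using nonreal_sv[OF u(1)] D(3) u(1) unfolding real_divisor_def by auto
  then show "divisor V (\<lambda>w. D w - orbit_divisor u w)" "effective V (\<lambda>w. D w - orbit_divisor u w)"
    using D(1,2) u unfolding divisor_def effective_def orbit_divisor_nonreal[OF u(1)] by auto
  have "sv w = u \<longleftrightarrow> w = sv u" "sv w = sv u \<longleftrightarrow> w = u" if "w \<in> V" for w
    using that u(1) sv_sv by (metis DiffD1)+
  then show "real_divisor V sv (\<lambda>w. D w - orbit_divisor u w)"
    using D(3) unfolding real_divisor_def orbit_divisor_nonreal[OF u(1)] by auto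
qed

lemma equiv_totally_real_real_divisor:
  assumes "divisor V D" "effective V D" "real_divisor V sv D"
  shows "equiv_totally_real D"
  using assms
proof (induction "\<Sum>v\<in>V. nat (D v)" arbitrary: D rule: less_induct)
  case less
  show ?case
  proof (cases "\<exists>u\<in>V - VR. D u > 0")
    case False
    then have "totally_real V sv D"
      using less.prems(2,3) by (intro totally_real_if_nonpos_nonreal) (auto simp: not_less)
    then show ?thesis
      by (rule equiv_totally_real_self[OF less.prems(1,2)])
  next
    case True
    then obtain u where u: "u \<in> V - VR" "D u > 0"
      by blast
    define D1 where "D1 w = D w - orbit_divisor u w" for w
    have "(\<Sum>v\<in>V. nat (D1 v)) < (\<Sum>v\<in>V. nat (D v))"
    proof (rule sum_strict_mono_ex1[OF finite_V])
      show "\<forall>v\<in>V. nat (D1 v) \<le> nat (D v)"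
        unfolding D1_def orbit_divisor_nonreal[OF u(1)] by auto
      show "\<exists>v\<in>V. nat (D1 v) < nat (D v)"
        using u unfolding D1_def orbit_divisor_nonreal[OF u(1)] by (intro bexI[of _ u]) auto
    qed
    then have "equiv_totally_real D1"
      using real_divisor_diff_orbit_divisor[OF less.prems u] unfolding D1_def[abs_def]
      by (intro less.hyps) auto
    then have "equiv_totally_real (\<lambda>w. D1 w + orbit_divisor u w)"
      using equiv_totally_real_add equiv_totally_real_orbit_divisor u(1) by blast
    then show ?thesis
      unfolding D1_def by simp
  qed
qed

end

theorem theorem3:
  fixes V :: "'v set" and E :: "'e set" and psi :: "'e \<Rightarrow> 'v set"
    and sv :: "'v \<Rightarrow> 'v" and se :: "'e \<Rightarrow> 'e" and D :: "'v \<Rightarrow> int"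
  assumes "graph V E psi"
    and "connected_graph V E psi"
    and "real_structure V E psi sv se"
    and "M_graph V E psi sv se"
    and "divisor V D" and "effective V D" and "real_divisor V sv D"
  shows "\<exists>D'. divisor V D' \<and> effective V D' \<and> totally_real V sv D' \<and>
              lin_equiv V E psi D D'"
proof -
  interpret real_M_graph V E psi sv se
    using assms(1-4) by unfold_locales
  show ?thesis
    using equiv_totally_real_real_divisor[OF assms(5-7)] unfolding equiv_totally_real_def .
qed

end
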